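(* Let $H$ be a hexagonal system with a perfect matching. The edges of $H$ fall into three classes of mutually parallel edges (the three edge directions of the hexagonal lattice); let $S$ be one of these classes of minimum cardinality. Then $cf(H)\le |S|$.
   Context: A hexagonal system (HS) is a finite 2-connected plane graph in which every interior face is a regular hexagon of the hexagonal lattice. For a graph $G$ with a perfect matching and a perfect matching $M$ of $G$, a forcing set of $M$ is a subset of $M$ contained in no other perfect matching of $G$. A complete forcing set of $G$ is a set $S\subseteq E(G)$ such that $S\cap M$ is a forcing set of $M$ for every perfect matching $M$ of $G$; $cf(G)$ is the minimum cardinality of a complete forcing set of $G$. *)

theory Defs
  imports Main
begin

text \<open>This is the honeycomb lattice up to a homeomorphism of the plane.\<close>

type_synonym vert = "int \<times> int"
type_synonym edge = "vert set"

definition lattice_edge :: "edge \<Rightarrow> bool" where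
  "lattice_edge e \<longleftrightarrow>
     (\<exists>x y. e = {(x,y),(x+1,y)}) \<or> (\<exists>x y. even (x+y) \<and> e = {(x,y),(x,y+1)})"

definition edge_class :: "nat \<Rightarrow> edge set" where
  "edge_class i =
    (if i = 0 then {e. \<exists>x y. even (x+y) \<and> e = {(x,y),(x,y+1)}}
     else if i = 1 then {e. \<exists>x y. even (x+y) \<and> e = {(x,y),(x+1,y)}}
     else {e. \<exists>x y. odd (x+y) \<and> e = {(x,y),(x+1,y)}})"

text \<open>Hexagonal cells (faces of the lattice), indexed by their lower left corner (x,y)
  with x+y even.\<close>

definition lattice_cell :: "int \<times> int \<Rightarrow> bool" where
  "lattice_cell c \<longleftrightarrow> even (fst c + snd c)"

definition cell_edges :: "int \<times> int \<Rightarrow> edge set" where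
  "cell_edges c = (case c of (x,y) \<Rightarrow>
     {{(x,y),(x+1,y)}, {(x+1,y),(x+2,y)}, {(x+2,y),(x+2,y+1)},
      {(x+2,y+1),(x+1,y+1)}, {(x+1,y+1),(x,y+1)}, {(x,y+1),(x,y)}})"

definition verts :: "edge set \<Rightarrow> vert set" where
  "verts E = \<Union>E"

definition connected_on :: "edge set \<Rightarrow> vert set \<Rightarrow> bool" where
  "connected_on E V \<longleftrightarrow>
     (\<forall>u\<in>V. \<forall>v\<in>V. (u, v) \<in> ({(a,b). a \<in> V \<and> b \<in> V \<and> {a,b} \<in> E})\<^sup>*)"

definition two_connected :: "edge set \<Rightarrow> bool" where
  "two_connected E \<longleftrightarrow> card (verts E) \<ge> 3 \<and> connected_on E (verts E) \<and>
     (\<forall>w\<in>verts E. connected_on E (verts E - {w}))"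

text \<open>Two cells lie in the same face of the plane graph with edge set E iff they are
  joined by a chain of cells consecutive ones of which share a lattice edge not in E.\<close>

definition face_step :: "edge set \<Rightarrow> ((int \<times> int) \<times> (int \<times> int)) set" where
  "face_step E = {(c, d). lattice_cell c \<and> lattice_cell d \<and> c \<noteq> d \<and>
                   (\<exists>e \<in> cell_edges c \<inter> cell_edges d. e \<notin> E)}"

definition face_of :: "edge set \<Rightarrow> int \<times> int \<Rightarrow> (int \<times> int) set" where
  "face_of E c = {d. (c, d) \<in> (face_step E)\<^sup>*}"

text \<open>Hexagonal system: a finite 2-connected subgraph of the hexagonal lattice
  (with the inherited plane embedding) all of whose interior (bounded) faces are single
  hexagons of the lattice.\<close>

definition hexagonal_system :: "edge set \<Rightarrow> bool" where
  "hexagonal_system E \<longleftrightarrow> finite E \<and> (\<forall>e\<in>E. lattice_edge e) \<and> two_connected E \<and>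
     (\<forall>c. lattice_cell c \<and> finite (face_of E c) \<longrightarrow> face_of E c = {c})"

definition perfect_matching :: "edge set \<Rightarrow> edge set \<Rightarrow> bool" where
  "perfect_matching E M \<longleftrightarrow> M \<subseteq> E \<and>
     (\<forall>v\<in>verts E. \<exists>!e. e \<in> M \<and> v \<in> e)"

definition forcing_set :: "edge set \<Rightarrow> edge set \<Rightarrow> edge set \<Rightarrow> bool" where
  "forcing_set E M T \<longleftrightarrow> T \<subseteq> M \<and>
     (\<forall>M'. perfect_matching E M' \<and> T \<subseteq> M' \<longrightarrow> M' = M)"

definition complete_forcing_set :: "edge set \<Rightarrow> edge set \<Rightarrow> bool" where
  "complete_forcing_set E S \<longleftrightarrow> S \<subseteq> E \<and>
     (\<forall>M. perfect_matching E M \<longrightarrow> forcing_set E M (S \<inter> M))"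

definition cf :: "edge set \<Rightarrow> nat" where
  "cf E = (LEAST k. \<exists>S. complete_forcing_set E S \<and> card S = k)"

end

theory Submission
  imports Defs "HOL-Library.Product_Lexorder"
begin

(*
  For perfect matchings M and M' of H, the edge sets M - M' and M' - M cover the same
  vertices, so every edge of one is continued at each end by an edge of the other.  In the
  hexagonal lattice such a finite alternating configuration contains edges of all three
  directions in M - M': if, say, it had no vertical edge, then from its highest (then
  leftmost) vertex the edges would be forced one after the other along the top row forever.
  Hence if M' contains the class-i edges of M then M' = M, i.e. every edge class of H is a
  complete forcing set.  This bound holds for each class.
*)

definition nbr :: "nat \<Rightarrow> vert \<Rightarrow> vert" where
  "nbr j = (\<lambda>(x,y).
     if j = 0 then (x, if even (x+y) then y+1 else y-1)
     else if j = 1 then (if even (x+y) then x+1 else x-1, y)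
     else (if even (x+y) then x-1 else x+1, y))"

lemma less_3_cases: "(j::nat) < 3 \<longleftrightarrow> j = 0 \<or> j = 1 \<or> j = 2"
  by auto

lemma vertical_edge_class: "even (a+b) \<Longrightarrow> {(a,b),(a,b+1)} \<in> edge_class 0"
  unfolding edge_class_def by auto

lemma horizontal_edge_class: "{(a,b),(a+1,b)} \<in> edge_class (if even (a+b) then 1 else 2)"
  unfolding edge_class_def by auto

lemma nbr_in_edge_class:
  assumes "j < 3"
  shows "{u, nbr j u} \<in> edge_class j"
proof -
  obtain x y where u: "u = (x,y)" by fastforce
  consider "j = 0" | "j = 1" | "j = 2" using assms by linarith
  then show ?thesis
  proof cases
    case 1
    then show ?thesis
      using vertical_edge_class[of x y] vertical_edge_class[of x "y-1"]
      by (cases "even (x+y)") (auto simp: u nbr_def insert_commute)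
  next
    case 2
    then show ?thesis
      using horizontal_edge_class[of x y] horizontal_edge_class[of "x-1" y]
      by (cases "even (x+y)") (auto simp: u nbr_def insert_commute)
  next
    case 3
    then show ?thesis
      using horizontal_edge_class[of x y] horizontal_edge_class[of "x-1" y]
      by (cases "even (x+y)") (auto simp: u nbr_def insert_commute)
  qed
qed

lemma edge_class_iff_nbr:
  assumes "j < 3"
  shows "e \<in> edge_class j \<longleftrightarrow> (\<exists>u. e = {u, nbr j u})"
proof
  assume "e \<in> edge_class j"
  with assms show "\<exists>u. e = {u, nbr j u}"
    unfolding edge_class_def nbr_def by (auto split: if_splits)
qed (use assms nbr_in_edge_class in blast)

lemma lattice_edge_nbr:
  assumes "lattice_edge e"
  obtains w j where "j < 3" "e = {w, nbr j w}"
  using assms unfolding lattice_edge_def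
proof (elim disjE exE conjE)
  fix x y
  assume "e = {(x,y),(x+1,y)}"
  then show thesis
    using that[of "if even (x+y) then 1 else 2" "(x,y)"] by (auto simp: nbr_def)
next
  fix x y
  assume "even (x+y)" "e = {(x,y),(x,y+1)}"
  then show thesis
    using that[of 0 "(x,y)"] by (simp add: nbr_def)
qed

lemma nbr_nbr [simp]: "nbr j (nbr j u) = u"
  unfolding nbr_def by (auto split: prod.splits)

lemma lattice_edge_at:
  assumes "lattice_edge e" "u \<in> e"
  shows "\<exists>j<3. e = {u, nbr j u}"
proof -
  obtain w j where "j < 3" "e = {w, nbr j w}"
    using assms(1) by (rule lattice_edge_nbr)
  moreover have "u = w \<or> w = nbr j u"
    using assms(2) calculation(2) by auto
  ultimately show ?thesis by (auto simp: insert_commute)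
qed

lemma finite_not_closed_under_translation:
  fixes A :: "vert set"
  assumes "finite A" "(x,y) \<in> A" "(a,b) \<noteq> (0,0)"
    and closed: "\<And>x y. (x,y) \<in> A \<Longrightarrow> (x+a, y+b) \<in> A"
  shows False
proof -
  define orbit where "orbit = (\<lambda>k::nat. (x + int k * a, y + int k * b))"
  have "orbit k \<in> A" for k
  proof (induction k)
    case (Suc k)
    have "(fst (orbit k) + a, snd (orbit k) + b) \<in> A"
      using Suc by (intro closed) simp
    moreover have "orbit (Suc k) = (fst (orbit k) + a, snd (orbit k) + b)"
      unfolding orbit_def by (simp add: algebra_simps)
    ultimately show ?case by simp
  qed (use assms(2) orbit_def in simp)
  then have "range orbit \<subseteq> A" by auto
  then have "finite (range orbit)"
    using assms(1) by (rule finite_subset)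
  moreover have "inj orbit"
  proof (rule injI)
    fix k l
    assume "orbit k = orbit l"
    then have "int k * a = int l * a" "int k * b = int l * b"
      unfolding orbit_def by simp_all
    then show "k = l" using assms(3) by auto
  qed
  ultimately have "finite (UNIV :: nat set)"
    by (rule finite_imageD)
  then show False by simp
qed

lemma finite_has_maximizer:
  fixes f :: "'a \<Rightarrow> 'b::linorder"
  assumes "finite A" "A \<noteq> {}"
  obtains u where "u \<in> A" "\<And>v. v \<in> A \<Longrightarrow> f v \<le> f u"
proof -
  have "Max (f ` A) \<in> f ` A"
    using assms by simp
  then obtain u where "u \<in> A" "f u = Max (f ` A)"
    by (auto simp: image_iff)
  then show thesis
    using that assms(1) by simp
qed

lemma exists_other_edge:
  assumes "\<forall>e\<in>B. lattice_edge e" "A \<inter> B = {}" "\<Union>A \<subseteq> \<Union>B" "{u,v} \<in> A"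
  shows "\<exists>k<3. {u, nbr k u} \<in> B \<and> nbr k u \<noteq> v"
proof -
  have "u \<in> \<Union>B" using assms(3,4) by blast
  then obtain e where e: "e \<in> B" "u \<in> e" by blast
  then obtain k where k: "k < 3" "e = {u, nbr k u}"
    using lattice_edge_at assms(1) by blast
  have "nbr k u \<noteq> v"
  proof
    assume "nbr k u = v"
    then have "{u,v} \<in> A \<inter> B" using assms(4) e k by simp
    then show False using assms(2) by simp
  qed
  then show ?thesis using e k by blast
qed

definition mirror :: "vert \<Rightarrow> vert" where
  "mirror = (\<lambda>(x,y). (-x, y))"

lemma mirror_mirror [simp]: "mirror (mirror u) = u"
  unfolding mirror_def by (simp split: prod.splits)

lemma inj_image_mirror: "inj (image mirror)"
  by (rule inj_on_inverseI[of _ "image mirror"]) (simp add: image_image)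

lemma lattice_edge_mirror:
  assumes "lattice_edge e"
  shows "lattice_edge (mirror ` e)"
proof -
  from assms consider (horizontal) x y where "e = {(x,y),(x+1,y)}"
    | (vertical) x y where "even (x+y)" "e = {(x,y),(x,y+1)}"
    unfolding lattice_edge_def by blast
  then show ?thesis
  proof cases
    case horizontal
    then have "mirror ` e = {(-x-1,y),(-x-1+1,y)}"
      by (auto simp: mirror_def)
    then show ?thesis unfolding lattice_edge_def by blast
  next
    case vertical
    then have "mirror ` e = {(-x,y),(-x,y+1)}" "even (-x+y)"
      by (auto simp: mirror_def)
    then show ?thesis unfolding lattice_edge_def by blast
  qed
qed

lemma mirror_nbr_1: "mirror (nbr 1 u) = nbr 2 (mirror u)"
  unfolding mirror_def nbr_def by (auto split: prod.splits)

lemma edge_class_1_mirror: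
  assumes "mirror ` e \<in> edge_class 1"
  shows "e \<in> edge_class 2"
proof -
  obtain w where "mirror ` e = {w, nbr 1 w}"
    using assms edge_class_iff_nbr[of 1] by auto
  then have "e = {mirror w, nbr 2 (mirror w)}"
    using image_image[of mirror mirror e] by (simp add: mirror_nbr_1[symmetric])
  then show ?thesis
    using nbr_in_edge_class[of 2] by simp
qed

locale alternating_pair =
  fixes P Q :: "edge set"
  assumes lattice_edges: "\<forall>e\<in>P \<union> Q. lattice_edge e"
    and disjoint: "P \<inter> Q = {}"
    and same_verts: "\<Union>P = \<Union>Q"
    and finite_verts: "finite (\<Union>P)"
begin

lemma P_edge_Q_edge: "{u,v} \<in> P \<Longrightarrow> \<exists>k<3. {u, nbr k u} \<in> Q \<and> nbr k u \<noteq> v"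
  by (rule exists_other_edge) (use lattice_edges disjoint same_verts in auto)

lemma Q_edge_P_edge: "{u,v} \<in> Q \<Longrightarrow> \<exists>k<3. {u, nbr k u} \<in> P \<and> nbr k u \<noteq> v"
  by (rule exists_other_edge) (use lattice_edges disjoint same_verts in auto)

lemma vertex_P_edge:
  assumes "u \<in> \<Union>P"
  shows "\<exists>j<3. {u, nbr j u} \<in> P"
proof -
  obtain e where "e \<in> P" "u \<in> e" using assms by blast
  moreover have "lattice_edge e" using calculation(1) lattice_edges by blast
  ultimately show ?thesis using lattice_edge_at by blast
qed

lemma edge_ends_in_verts: "{u,v} \<in> P \<or> {u,v} \<in> Q \<Longrightarrow> v \<in> \<Union>P"
  using same_verts by auto

lemma verts_nonempty:
  assumes "P \<noteq> {}"
  shows "\<Union>P \<noteq> {}"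
proof -
  obtain e where "e \<in> P" using assms by blast
  moreover have "e \<noteq> {}" if "lattice_edge e" for e
    using that unfolding lattice_edge_def by auto
  ultimately show ?thesis using lattice_edges by blast
qed

lemma extremal_vertex:
  fixes f :: "vert \<Rightarrow> 'b::linorder"
  assumes "P \<noteq> {}"
  obtains x0 y0 where "(x0,y0) \<in> \<Union>P" "\<And>v. v \<in> \<Union>P \<Longrightarrow> f v \<le> f (x0,y0)"
proof -
  obtain u where "u \<in> \<Union>P" "\<And>v. v \<in> \<Union>P \<Longrightarrow> f v \<le> f u"
    using finite_has_maximizer[OF finite_verts verts_nonempty[OF assms]] by metis
  then show thesis
    using that[of "fst u" "snd u"] by simp
qed

lemma meets_edge_class_0:
  assumes "P \<noteq> {}" "P \<inter> edge_class 0 = {}"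
  shows False
proof -
  have not_vertical: "{u, nbr 0 u} \<notin> P" for u
    using assms(2) nbr_in_edge_class[of 0 u] by auto
  obtain x0 y0 where top: "(x0,y0) \<in> \<Union>P"
    and top_left: "\<And>v. v \<in> \<Union>P \<Longrightarrow> (snd v, - fst v) \<le> (snd (x0,y0), - fst (x0,y0))"
    using extremal_vertex[OF assms(1), of "\<lambda>v. (snd v, - fst v)"] by metis
  have highest: "snd v \<le> y0" if "v \<in> \<Union>P" for v
    using top_left[OF that] by auto
  have leftmost: "x0 \<le> fst v" if "v \<in> \<Union>P" "snd v = y0" for v
    using top_left[OF that(1)] that(2) by auto
  \<comment> \<open>No edge at the top row leads up, so the P- and Q-edges there alternate to the right forever.\<close>
  define R where "R = {(a,b). (a,b) \<in> \<Union>P \<and> b = y0 \<and> odd (a+b) \<and> {(a,b),(a+1,b)} \<in> P}"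
  have "(x0,y0) \<in> R"
  proof -
    obtain j where j: "j < 3" "{(x0,y0), nbr j (x0,y0)} \<in> P"
      using vertex_P_edge top by blast
    obtain k where k: "k < 3" "{(x0,y0), nbr k (x0,y0)} \<in> Q" "nbr k (x0,y0) \<noteq> nbr j (x0,y0)"
      using P_edge_Q_edge j(2) by blast
    have "nbr j (x0,y0) \<in> \<Union>P" "nbr k (x0,y0) \<in> \<Union>P"
      using edge_ends_in_verts j(2) k(2) by blast+
    note ends = this highest[OF this(1)] highest[OF this(2)] leftmost[OF this(1)] leftmost[OF this(2)]
    show ?thesis
      using j k not_vertical[of "(x0,y0)"] top ends
      unfolding R_def less_3_cases by (auto simp: nbr_def split: if_splits)
  qed
  moreover have "(a+2,b) \<in> R" if "(a,b) \<in> R" for a b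
  proof -
    have b: "b = y0" "odd (a+b)" and e: "{(a+1,b),(a,b)} \<in> P"
      using that unfolding R_def by (auto simp: insert_commute)
    obtain k where k: "k < 3" "{(a+1,b), nbr k (a+1,b)} \<in> Q" "nbr k (a+1,b) \<noteq> (a,b)"
      using P_edge_Q_edge[OF e] by blast
    have "nbr k (a+1,b) \<in> \<Union>P"
      using edge_ends_in_verts k(2) by blast
    from highest[OF this] have "nbr k (a+1,b) = (a+2,b)"
      using k(1,3) b unfolding less_3_cases
      by (auto simp: nbr_def split: if_splits)
    then have f: "{(a+2,b),(a+1,b)} \<in> Q"
      using k(2) by (simp add: insert_commute)
    obtain j where j: "j < 3" "{(a+2,b), nbr j (a+2,b)} \<in> P" "nbr j (a+2,b) \<noteq> (a+1,b)"
      using Q_edge_P_edge[OF f] by blast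
    then have "nbr j (a+2,b) = (a+3,b)"
      using not_vertical[of "(a+2,b)"] b unfolding less_3_cases
      by (auto simp: nbr_def split: if_splits)
    then show ?thesis
      using j(2) b unfolding R_def by (auto simp: add.assoc)
  qed
  moreover have "finite R"
    by (rule finite_subset[OF _ finite_verts]) (auto simp: R_def)
  ultimately show False
    by (intro finite_not_closed_under_translation[of R x0 y0 2 0]) auto
qed

lemma meets_edge_class_1:
  assumes "P \<noteq> {}" "P \<inter> edge_class 1 = {}"
  shows False
proof -
  have not_class_1: "{u, nbr 1 u} \<notin> P" for u
    using assms(2) nbr_in_edge_class[of 1 u] by auto
  \<comment> \<open>F is constant along the staircase of class-2 and upward class-0 steps, and every
    other step from it raises F or uses a class-1 edge.\<close>
  define F where "F = (\<lambda>(a::int, b::int). a - b + (if odd (a+b) then 1 else 0))"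
  obtain x0 y0 where top: "(x0,y0) \<in> \<Union>P"
    and extremal: "\<And>v. v \<in> \<Union>P \<Longrightarrow> (F v, - (fst v + snd v)) \<le> (F (x0,y0), - (fst (x0,y0) + snd (x0,y0)))"
    using extremal_vertex[OF assms(1), of "\<lambda>v. (F v, - (fst v + snd v))"] by metis
  have highest: "F v \<le> F (x0,y0)" if "v \<in> \<Union>P" for v
    using extremal[OF that] by auto
  have lowest: "x0 + y0 \<le> fst v + snd v" if "v \<in> \<Union>P" "F v = F (x0,y0)" for v
    using extremal[OF that(1)] that(2) by auto
  define R where "R = {(a,b). (a,b) \<in> \<Union>P \<and> F (a,b) = F (x0,y0) \<and> odd (a+b) \<and> {(a,b),(a+1,b)} \<in> P}"
  have "(x0,y0) \<in> R"
  proof -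
    obtain j where j: "j < 3" "{(x0,y0), nbr j (x0,y0)} \<in> P"
      using vertex_P_edge top by blast
    obtain k where k: "k < 3" "{(x0,y0), nbr k (x0,y0)} \<in> Q" "nbr k (x0,y0) \<noteq> nbr j (x0,y0)"
      using P_edge_Q_edge j(2) by blast
    have "nbr j (x0,y0) \<in> \<Union>P" "nbr k (x0,y0) \<in> \<Union>P"
      using edge_ends_in_verts j(2) k(2) by blast+
    note ends = this highest[OF this(1)] highest[OF this(2)] lowest[OF this(1)] lowest[OF this(2)]
    show ?thesis
      using j k not_class_1[of "(x0,y0)"] top ends
      unfolding R_def less_3_cases by (auto simp: nbr_def F_def split: if_splits)
  qed
  moreover have "(a+1,b+1) \<in> R" if "(a,b) \<in> R" for a b
  proof -
    have b: "F (a,b) = F (x0,y0)" "odd (a+b)" and e: "{(a+1,b),(a,b)} \<in> P"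
      using that unfolding R_def by (auto simp: insert_commute)
    obtain k where k: "k < 3" "{(a+1,b), nbr k (a+1,b)} \<in> Q" "nbr k (a+1,b) \<noteq> (a,b)"
      using P_edge_Q_edge[OF e] by blast
    have "nbr k (a+1,b) \<in> \<Union>P"
      using edge_ends_in_verts k(2) by blast
    from highest[OF this] have "nbr k (a+1,b) = (a+1,b+1)"
      using k(1,3) b unfolding less_3_cases
      by (auto simp: nbr_def F_def split: if_splits)
    then have f: "{(a+1,b+1),(a+1,b)} \<in> Q"
      using k(2) by (simp add: insert_commute)
    obtain j where j: "j < 3" "{(a+1,b+1), nbr j (a+1,b+1)} \<in> P" "nbr j (a+1,b+1) \<noteq> (a+1,b)"
      using Q_edge_P_edge[OF f] by blast
    then have "nbr j (a+1,b+1) = (a+2,b+1)"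
      using not_class_1[of "(a+1,b+1)"] b unfolding less_3_cases
      by (auto simp: nbr_def split: if_splits)
    moreover have "F (a+1,b+1) = F (x0,y0)"
      using b by (auto simp: F_def)
    ultimately show ?thesis
      using j(2) b edge_ends_in_verts[of "(a+2,b+1)" "(a+1,b+1)"] unfolding R_def
      by (auto simp: add.assoc insert_commute)
  qed
  moreover have "finite R"
    by (rule finite_subset[OF _ finite_verts]) (auto simp: R_def)
  ultimately show False
    by (intro finite_not_closed_under_translation[of R x0 y0 1 1]) auto
qed

lemma meets_edge_class_2:
  assumes "P \<noteq> {}" "P \<inter> edge_class 2 = {}"
  shows False
proof -
  interpret mirrored: alternating_pair "image mirror ` P" "image mirror ` Q"
  proof
    show "\<forall>e \<in> image mirror ` P \<union> image mirror ` Q. lattice_edge e"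
      using lattice_edges lattice_edge_mirror by auto
    show "image mirror ` P \<inter> image mirror ` Q = {}"
      using disjoint inj_image_mirror by (simp add: image_Int[symmetric])
    show "\<Union>(image mirror ` P) = \<Union>(image mirror ` Q)"
      using same_verts by (metis image_Union)
    show "finite (\<Union>(image mirror ` P))"
      using finite_verts by (simp add: image_Union[symmetric])
  qed
  have "image mirror ` P \<inter> edge_class 1 = {}"
    using assms(2) edge_class_1_mirror by blast
  then show False
    using mirrored.meets_edge_class_1 assms(1) by blast
qed

lemma meets_edge_class:
  assumes "P \<noteq> {}" "i < 3"
  shows "P \<inter> edge_class i \<noteq> {}"
  using assms meets_edge_class_0 meets_edge_class_1 meets_edge_class_2 unfolding less_3_cases
  by auto

end

lemma perfect_matching_diff_verts:
  assumes "perfect_matching H M" "perfect_matching H M'"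
  shows "\<Union>(M - M') \<subseteq> \<Union>(M' - M)"
proof
  fix u
  assume "u \<in> \<Union>(M - M')"
  then obtain e where e: "e \<in> M" "e \<notin> M'" "u \<in> e" by blast
  then have u: "u \<in> verts H"
    using assms(1) unfolding perfect_matching_def verts_def by blast
  then obtain e' where e': "e' \<in> M'" "u \<in> e'"
    using assms(2) unfolding perfect_matching_def by blast
  have "e' \<notin> M"
  proof
    assume "e' \<in> M"
    then have "e' = e"
      using assms(1) u e e' unfolding perfect_matching_def by blast
    then show False using e e' by blast
  qed
  then show "u \<in> \<Union>(M' - M)" using e' by blast
qed

lemma perfect_matchings_alternating_pair:
  assumes "perfect_matching H M" "perfect_matching H M'"
    and "finite H" "\<forall>e\<in>H. lattice_edge e"
  shows "alternating_pair (M - M') (M' - M)"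
proof
  have "M \<subseteq> H" "M' \<subseteq> H"
    using assms(1,2) unfolding perfect_matching_def by auto
  then show "\<forall>e\<in>(M - M') \<union> (M' - M). lattice_edge e"
    using assms(4) by blast
  show "(M - M') \<inter> (M' - M) = {}" by blast
  show "\<Union>(M - M') = \<Union>(M' - M)"
    using perfect_matching_diff_verts[OF assms(1,2)] perfect_matching_diff_verts[OF assms(2,1)]
    by (rule antisym)
  have "finite e" if "e \<in> H" for e
    using assms(4) that unfolding lattice_edge_def by auto
  then have "finite (\<Union>H)"
    using assms(3) by blast
  then show "finite (\<Union>(M - M'))"
    by (rule finite_subset[rotated]) (use \<open>M \<subseteq> H\<close> in blast)
qed

lemma complete_forcing_set_edge_class:
  assumes "finite H" "\<forall>e\<in>H. lattice_edge e" "i < 3"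
  shows "complete_forcing_set H (H \<inter> edge_class i)"
  unfolding complete_forcing_set_def forcing_set_def
proof (intro conjI allI impI)
  fix M M'
  assume M: "perfect_matching H M" and "perfect_matching H M' \<and> H \<inter> edge_class i \<inter> M \<subseteq> M'"
  then have M': "perfect_matching H M'" and fixed: "H \<inter> edge_class i \<inter> M \<subseteq> M'"
    by auto
  interpret alternating_pair "M - M'" "M' - M"
    using perfect_matchings_alternating_pair[OF M M' assms(1,2)] .
  interpret swapped: alternating_pair "M' - M" "M - M'"
    using perfect_matchings_alternating_pair[OF M' M assms(1,2)] .
  have "(M - M') \<inter> edge_class i = {}"
    using fixed M unfolding perfect_matching_def by blast
  then have "M - M' = {}"
    using meets_edge_class assms(3) by blast
  moreover have "M' - M = {}"
    using swapped.verts_nonempty same_verts \<open>M - M' = {}\<close> by auto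
  ultimately show "M' = M" by blast
qed auto

theorem mainTheorem4:
  fixes H :: "edge set" and i :: nat
  assumes "hexagonal_system H"
    and "\<exists>M. perfect_matching H M"
    and "i < 3"
    and "\<forall>j<3. card (H \<inter> edge_class i) \<le> card (H \<inter> edge_class j)"
  shows "cf H \<le> card (H \<inter> edge_class i)"
proof -
  have "finite H" "\<forall>e\<in>H. lattice_edge e"
    using assms(1) unfolding hexagonal_system_def by auto
  then have "complete_forcing_set H (H \<inter> edge_class i)"
    using assms(3) by (rule complete_forcing_set_edge_class)
  then show ?thesis
    unfolding cf_def by (auto intro: Least_le)
qed

end
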